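(* Let $h\in\mathbb R[x_1,\ldots,x_n]$ be homogeneous of degree $d$ with $h(e)\neq0$ for some $e\in\mathbb R^n$, and let $c_\alpha$, $H_\alpha$ and $\mathcal H_e(h)$ be as in the context. Assume there is a positive linear functional $\varphi\colon\mathbb C\langle z\rangle\to\mathbb C$ (i.e. $\varphi(p^*p)\ge0$ for all $p$) with $\varphi(H_\alpha)=c_\alpha$ for all $\alpha\in\mathbb N^n$ with $|\alpha|\le2(d-1)$. Then $\mathcal H_e(h)$ is a sum of hermitian squares of polynomial matrices, i.e. $\mathcal H_e(h)=\sum_i A_i^*A_i$ for finitely many matrices $A_i$ with entries in $\mathbb C[x_1,\ldots,x_n]$ (where $^*$ is conjugate transposition, coefficientwise conjugation, variables $x_j$ being fixed).
   Context: $h_{a,e}(t):=h(a-te)$. $\mathbb C\langle z\rangle=\mathbb C\langle z_1,\ldots,z_n\rangle$ is the free noncommutative unital algebra with involution determined by $z_i^*=z_i$. For a univariate polynomial $p$ of degree $d$ with complex roots $\lambda_1,\ldots,\lambda_d$, $N_k(p)=\sum_j\lambda_j^k$ is the $k$-th Newton sum. Write $N_k(h_{a,e}(t))=\sum_{|\alpha|=k}c_\alpha a^\alpha$ as a polynomial in $a\in\mathbb R^n$, defining $c_\alpha$. $H_\alpha\in\mathbb C\langle z\rangle$ is the sum of all words in $z_1,\dots,z_n$ containing each $z_i$ exactly $\alpha_i$ times. $\mathcal H_e(h)$ is the $d\times d$ Hermite matrix of $h(x-te)$ as a polynomial in $t$: $\mathcal H_e(h)=(N_{i+j}(h(x-te)))_{i,j=0,\ldots,d-1}$,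 whose entries are polynomials in $x$. *)

theory Defs
  imports Complex_Main "HOL-Library.Poly_Mapping" "HOL-Computational_Algebra.Polynomial"
begin

(* Commutative multivariate polynomials: maps from exponent vectors (nat \<Rightarrow>\<^sub>0 nat)
   to coefficients; variable x_{i+1} of the paper is index i. *)
type_synonym 'a mpoly = "(nat \<Rightarrow>\<^sub>0 nat) \<Rightarrow>\<^sub>0 'a"

definition mdeg :: "(nat \<Rightarrow>\<^sub>0 nat) \<Rightarrow> nat" where
  "mdeg \<alpha> = (\<Sum>i\<in>Poly_Mapping.keys \<alpha>. Poly_Mapping.lookup \<alpha> i)"

definition mono_eval :: "(nat \<Rightarrow> 'a::comm_semiring_1) \<Rightarrow> (nat \<Rightarrow>\<^sub>0 nat) \<Rightarrow> 'a" where
  "mono_eval a \<alpha> = (\<Prod>i\<in>Poly_Mapping.keys \<alpha>. a i ^ Poly_Mapping.lookup \<alpha> i)"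

definition mpoly_eval :: "'a::comm_semiring_1 mpoly \<Rightarrow> (nat \<Rightarrow> 'a) \<Rightarrow> 'a" where
  "mpoly_eval p x = (\<Sum>\<alpha>\<in>Poly_Mapping.keys p. Poly_Mapping.lookup p \<alpha> * mono_eval x \<alpha>)"

definition mpoly_in_vars :: "nat \<Rightarrow> ('a::zero) mpoly \<Rightarrow> bool" where
  "mpoly_in_vars n p \<longleftrightarrow> (\<forall>\<alpha>\<in>Poly_Mapping.keys p. Poly_Mapping.keys \<alpha> \<subseteq> {..<n})"

definition homogeneous :: "nat \<Rightarrow> ('a::zero) mpoly \<Rightarrow> bool" where
  "homogeneous d p \<longleftrightarrow> (\<forall>\<alpha>\<in>Poly_Mapping.keys p. mdeg \<alpha> = d)"

definition mpoly_cnj :: "complex mpoly \<Rightarrow> complex mpoly" where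
  "mpoly_cnj p = Poly_Mapping.map cnj p"

(* h_{a,e}(t) = h(a - t e) as a univariate complex polynomial in t *)
definition h_ae :: "real mpoly \<Rightarrow> (nat \<Rightarrow> real) \<Rightarrow> (nat \<Rightarrow> real) \<Rightarrow> complex poly" where
  "h_ae h a e = (\<Sum>\<alpha>\<in>Poly_Mapping.keys h. smult (complex_of_real (Poly_Mapping.lookup h \<alpha>))
       (\<Prod>i\<in>Poly_Mapping.keys \<alpha>. [:complex_of_real (a i), - complex_of_real (e i):] ^ Poly_Mapping.lookup \<alpha> i))"

definition newton_sum :: "nat \<Rightarrow> complex poly \<Rightarrow> complex" where
  "newton_sum k p = (\<Sum>r\<in>{r. poly p r = 0}. of_nat (order r p) * r ^ k)"

(* Hermite matrix entry (i,j) of H_e(h): the polynomial N_{i+j}(h(x - t e)) in x,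
   written as sum_{|alpha| = i+j} c_alpha x^alpha *)
definition hermite_entry :: "nat \<Rightarrow> ((nat \<Rightarrow>\<^sub>0 nat) \<Rightarrow> complex) \<Rightarrow> nat \<Rightarrow> nat \<Rightarrow> complex mpoly" where
  "hermite_entry n c i j =
     (\<Sum>\<alpha>\<in>{\<alpha>. mdeg \<alpha> = i + j \<and> Poly_Mapping.keys \<alpha> \<subseteq> {..<n}}. Poly_Mapping.single \<alpha> (c \<alpha>))"

(* Free noncommutative algebra C<z_1..z_n>: finitely supported coefficient functions
   on words (lists of letter indices < n). *)
type_synonym ncpoly = "nat list \<Rightarrow> complex"

definition nc_alg :: "nat \<Rightarrow> ncpoly set" where
  "nc_alg n = {p. finite {w. p w \<noteq> 0} \<and> (\<forall>w. p w \<noteq> 0 \<longrightarrow> set w \<subseteq> {..<n})}"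

definition nc_add :: "ncpoly \<Rightarrow> ncpoly \<Rightarrow> ncpoly" where
  "nc_add p q = (\<lambda>w. p w + q w)"

definition nc_scale :: "complex \<Rightarrow> ncpoly \<Rightarrow> ncpoly" where
  "nc_scale c p = (\<lambda>w. c * p w)"

(* product: concatenation of words, extended bilinearly *)
definition nc_mult :: "ncpoly \<Rightarrow> ncpoly \<Rightarrow> ncpoly" where
  "nc_mult p q = (\<lambda>w. \<Sum>i\<le>length w. p (take i w) * q (drop i w))"

(* involution with z_i^* = z_i: conjugate coefficients, reverse words *)
definition nc_star :: "ncpoly \<Rightarrow> ncpoly" where
  "nc_star p = (\<lambda>w. cnj (p (rev w)))"

definition H_word :: "(nat \<Rightarrow>\<^sub>0 nat) \<Rightarrow> ncpoly" where
  "H_word \<alpha> = (\<lambda>w. if (\<forall>i. count_list w i = Poly_Mapping.lookup \<alpha> i) then 1 else 0)"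

definition positive_functional :: "nat \<Rightarrow> (ncpoly \<Rightarrow> complex) \<Rightarrow> bool" where
  "positive_functional n \<phi> \<longleftrightarrow>
     (\<forall>p\<in>nc_alg n. \<forall>q\<in>nc_alg n. \<phi> (nc_add p q) = \<phi> p + \<phi> q) \<and>
     (\<forall>c. \<forall>p\<in>nc_alg n. \<phi> (nc_scale c p) = c * \<phi> p) \<and>
     (\<forall>p\<in>nc_alg n. Im (\<phi> (nc_mult (nc_star p) p)) = 0 \<and> Re (\<phi> (nc_mult (nc_star p) p)) \<ge> 0)"

end

theory Submission
  imports Defs
begin

(*
  Both the Hermite matrix and the candidate Gram products are images, under the
  abelianisation word \<mapsto> monomial, of noncommutative data.  The entry (i, j) of
  H_e(h) is \<Sum>_{|\<alpha>| = i+j} c_\<alpha> x^\<alpha>, and since \<phi>(H_\<alpha>) = c_\<alpha> with H_\<alpha> the sum of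
  all words of exponent \<alpha>, it equals the abelianisation of \<Sum>_{|u| = i+j} \<phi>(u) u.
  Positivity of \<phi> makes the moment matrix (\<phi>(a^* b))_{a,b}, indexed by words of
  length < d, positive semidefinite, so a Cholesky-type elimination writes it as a
  Gram matrix \<Sum>_k conj(B_k a) B_k b.  Splitting each word of length i + j as
  a^* b with |a| = i, |b| = j then gives H_e(h)_{ij} = \<Sum>_k conj(A_{k,i}) A_{k,j},
  where A_{k,i} is the abelianisation of \<Sum>_{|w| = i} B_k(w) w.
*)

definition hform :: "'a set \<Rightarrow> ('a \<Rightarrow> 'a \<Rightarrow> complex) \<Rightarrow> ('a \<Rightarrow> complex) \<Rightarrow> complex" where
  "hform I M u = (\<Sum>a\<in>I. \<Sum>b\<in>I. cnj (u a) * u b * M a b)"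

definition psd_on :: "'a set \<Rightarrow> ('a \<Rightarrow> 'a \<Rightarrow> complex) \<Rightarrow> bool" where
  "psd_on I M \<longleftrightarrow> (\<forall>u. Im (hform I M u) = 0 \<and> 0 \<le> Re (hform I M u))"

lemma hform_two_points:
  assumes "finite I" "a \<in> I" "b \<in> I"
  shows "hform I M (\<lambda>z. (if z = a then s else 0) + (if z = b then t else 0)) =
     cnj s * s * M a a + cnj s * t * M a b + cnj t * s * M b a + cnj t * t * M b b"
proof -
  have delta: "(\<Sum>x\<in>I. \<Sum>y\<in>I. cnj (if x = a' then s' else 0) * (if y = b' then t' else 0) * M x y)
      = cnj s' * t' * M a' b'" if "a' \<in> I" "b' \<in> I" for a' b' s' t'
  proof -
    have "(\<Sum>x\<in>I. \<Sum>y\<in>I. cnj (if x = a' then s' else 0) * (if y = b' then t' else 0) * M x y)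
        = (\<Sum>x\<in>I. if x = a' then (\<Sum>y\<in>I. if y = b' then cnj s' * t' * M x y else 0) else 0)"
      by (auto intro!: sum.cong)
    then show ?thesis using that assms(1) by (simp add: sum.delta)
  qed
  let ?f = "\<lambda>z. if z = a then s else 0" and ?g = "\<lambda>z. if z = b then t else 0"
  have "hform I M (\<lambda>z. ?f z + ?g z) = (\<Sum>x\<in>I. \<Sum>y\<in>I. cnj (?f x) * ?f y * M x y)
    + (\<Sum>x\<in>I. \<Sum>y\<in>I. cnj (?f x) * ?g y * M x y) + (\<Sum>x\<in>I. \<Sum>y\<in>I. cnj (?g x) * ?f y * M x y)
    + (\<Sum>x\<in>I. \<Sum>y\<in>I. cnj (?g x) * ?g y * M x y)"
    unfolding hform_def by (simp add: sum.distrib algebra_simps)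
  then show ?thesis using assms by (simp only: delta)
qed

lemma hform_insert:
  assumes "finite F" "x \<notin> F"
  shows "hform (insert x F) M u = cnj (u x) * u x * M x x + (\<Sum>b\<in>F. cnj (u x) * u b * M x b)
     + (\<Sum>a\<in>F. cnj (u a) * u x * M a x) + hform F M u"
  using assms by (simp add: hform_def sum.distrib algebra_simps)

lemma psd_on_hermitian:
  assumes "finite I" "psd_on I M" "a \<in> I" "b \<in> I"
  shows "M b a = cnj (M a b)"
proof -
  have real: "Im (hform I M u) = 0" for u using assms(2) psd_on_def by blast
  have aa: "Im (M a a) = 0" and bb: "Im (M b b) = 0"
    using real[of "\<lambda>z. (if z = a then 1 else 0) + (if z = a then 0 else 0)"]
      real[of "\<lambda>z. (if z = b then 1 else 0) + (if z = b then 0 else 0)"]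
      hform_two_points[OF assms(1,3,3), of M 1 0] hform_two_points[OF assms(1,4,4), of M 1 0]
    by simp_all
  have "Im (M a b + M b a) = 0"
    using real[of "\<lambda>z. (if z = a then 1 else 0) + (if z = b then 1 else 0)"]
      hform_two_points[OF assms(1,3,4), of M 1 1] aa bb by simp
  moreover have "Re (M a b - M b a) = 0"
    using real[of "\<lambda>z. (if z = a then 1 else 0) + (if z = b then \<i> else 0)"]
      hform_two_points[OF assms(1,3,4), of M 1 \<i>] aa bb by (simp add: algebra_simps)
  ultimately show ?thesis by (simp add: complex_eq_iff)
qed

lemma psd_on_diag:
  assumes "finite I" "psd_on I M" "a \<in> I"
  shows "M a a = complex_of_real (Re (M a a))" "Re (M a a) \<ge> 0"
proof -
  let ?u = "\<lambda>z. (if z = a then 1 else 0) + (if z = a then 0 else 0)"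
  have "hform I M ?u = M a a"
    using hform_two_points[OF assms(1,3,3), of M 1 0] by simp
  moreover have "Im (hform I M ?u) = 0 \<and> 0 \<le> Re (hform I M ?u)"
    using assms(2) psd_on_def by blast
  ultimately show "M a a = complex_of_real (Re (M a a))" "Re (M a a) \<ge> 0"
    by (simp_all add: complex_eq_iff)
qed

lemma psd_on_zero_diag_row:
  assumes "finite I" "psd_on I M" "a \<in> I" "b \<in> I" "M a a = 0"
  shows "M a b = 0"
proof (rule ccontr)
  assume nz: "M a b \<noteq> 0"
  define z where "z = M a b"
  define N where "N = (cmod z)\<^sup>2"
  have N: "N > 0" using nz by (simp add: N_def z_def)
  define r where "r = (Re (M b b) + 1) / (2 * N)"
  define s where "s = - (complex_of_real r * z)"
  \<comment> \<open>For large r the test vector s e_a + e_b makes the form negative.\<close>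
  let ?u = "\<lambda>y. (if y = a then s else 0) + (if y = b then 1 else 0)"
  have zz: "z * cnj z = complex_of_real N"
    using complex_norm_square[of z] by (simp add: N_def)
  have "M b a = cnj z" using psd_on_hermitian[OF assms(1-4)] z_def by simp
  then have "hform I M ?u = M b b - 2 * complex_of_real r * (z * cnj z)"
    using hform_two_points[OF assms(1,3,4), of M s 1] assms(5)
    by (simp add: s_def z_def[symmetric] algebra_simps)
  then have "Re (hform I M ?u) = Re (M b b) - 2 * r * N" by (simp add: zz)
  also have "\<dots> = -1" using N by (simp add: r_def field_simps)
  finally have "Re (hform I M ?u) < 0" by simp
  with assms(2) show False unfolding psd_on_def by (meson not_less)
qed

(* When M x x = 0 the row of x vanishes and both sides are 0, as x / 0 = 0. *)
lemma psd_on_pivot: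
  assumes "finite I" "psd_on I M" "x \<in> I" "a \<in> I" "b \<in> I" "a = x \<or> b = x"
  shows "M a b = M a x * M x b / M x x"
proof (cases "M x x = 0")
  case True
  have "M x c = 0" if "c \<in> I" for c
    using psd_on_zero_diag_row[OF assms(1,2,3) that True] .
  moreover have "M a x = cnj (M x a)"
    using psd_on_hermitian[OF assms(1,2,3,4)] .
  ultimately show ?thesis using assms(4-6) True by auto
qed (use assms(6) in auto)

lemma psd_on_schur_complement:
  assumes "finite F" "x \<notin> F" "psd_on (insert x F) M"
  shows "psd_on F (\<lambda>a b. M a b - M a x * M x b / M x x)"
  unfolding psd_on_def
proof
  fix u
  let ?M' = "\<lambda>a b. M a b - M a x * M x b / M x x"
  have fin: "finite (insert x F)" using assms(1) by simp
  have herm: "M a x = cnj (M x a)" if "a \<in> F" for a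
    using psd_on_hermitian[OF fin assms(3) insertI1, of a] that by simp
  define m where "m = Re (M x x)"
  have m: "M x x = complex_of_real m"
    using psd_on_diag(1)[OF fin assms(3) insertI1] by (simp add: m_def)
  define S where "S = (\<Sum>b\<in>F. M x b * u b)"
  define t where "t = - S / M x x"
  define v where "v = u(x := t)"
  have vx: "v x = t" by (simp add: v_def)
  have row: "(\<Sum>b\<in>F. cnj t * v b * M x b) = cnj t * S"
    unfolding S_def sum_distrib_left using assms(2) by (intro sum.cong) (auto simp: v_def)
  have col: "(\<Sum>a\<in>F. cnj (v a) * t * M a x) = t * cnj S"
    unfolding S_def cnj_sum sum_distrib_left using assms(2) herm
    by (intro sum.cong) (auto simp: v_def)
  have restrict: "hform F M v = hform F M u"
    unfolding hform_def using assms(2) by (intro sum.cong) (auto simp: v_def)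
  have "(\<Sum>a\<in>F. \<Sum>b\<in>F. cnj (u a) * u b * (M a x * M x b / M x x))
      = (\<Sum>a\<in>F. cnj (u a) * M a x) * (\<Sum>b\<in>F. u b * M x b) / M x x"
    unfolding sum_product sum_divide_distrib by (intro sum.cong refl) (simp add: algebra_simps)
  also have "(\<Sum>a\<in>F. cnj (u a) * M a x) = cnj S"
    unfolding S_def cnj_sum using herm by (intro sum.cong) simp_all
  finally have schur: "hform F ?M' u = hform F M u - cnj S * S / M x x"
    unfolding hform_def by (simp add: S_def algebra_simps sum_subtractf)
  \<comment> \<open>The minimising value t of the pivot coordinate turns the form on \<open>insert x F\<close>
    into the Schur complement form.\<close>
  have "hform (insert x F) M v = cnj t * t * M x x + cnj t * S + t * cnj S + hform F M u"
    using hform_insert[OF assms(1,2), of M v] by (simp only: row col restrict vx)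
  also have "\<dots> = hform F ?M' u"
    unfolding schur unfolding t_def m by (cases "m = 0") (simp_all add: field_simps)
  finally show "Im (hform F ?M' u) = 0 \<and> 0 \<le> Re (hform F ?M' u)"
    using assms(3) unfolding psd_on_def by metis
qed

lemma psd_on_gram_factorization:
  assumes "finite I" "psd_on I M"
  shows "\<exists>(r :: nat) B. \<forall>a\<in>I. \<forall>b\<in>I. M a b = (\<Sum>k<r. cnj (B k a) * B k b)"
  using assms
proof (induction I arbitrary: M rule: finite_induct)
  case empty
  then show ?case by auto
next
  case (insert x F)
  have fin: "finite (insert x F)" using insert.hyps by simp
  obtain r :: nat and B
    where B: "\<forall>a\<in>F. \<forall>b\<in>F. M a b - M a x * M x b / M x x = (\<Sum>k<r. cnj (B k a) * B k b)"
    using insert.IH[OF psd_on_schur_complement[OF insert.hyps insert.prems]] by blast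
  define m where "m = Re (M x x)"
  have m: "M x x = complex_of_real m" "m \<ge> 0"
    using psd_on_diag[OF fin insert.prems] m_def by auto
  define B0 where "B0 a = M x a / complex_of_real (sqrt m)" for a
  have B0: "cnj (B0 a) * B0 b = M a x * M x b / M x x" if "a \<in> insert x F" for a b
    using psd_on_hermitian[OF fin insert.prems, of x a] that m
    by (simp add: B0_def field_simps flip: of_real_mult)
  define C where "C k = (if k = 0 then B0 else (B (k - 1))(x := 0))" for k
  have "M a b = (\<Sum>k<Suc r. cnj (C k a) * C k b)" if a: "a \<in> insert x F" and b: "b \<in> insert x F" for a b
  proof -
    have "(\<Sum>k<Suc r. cnj (C k a) * C k b)
        = M a x * M x b / M x x + (\<Sum>k<r. cnj (((B k)(x := 0)) a) * ((B k)(x := 0)) b)"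
      unfolding sum.lessThan_Suc_shift by (simp add: C_def B0[OF a])
    also have "\<dots> = M a b"
    proof (cases "a = x \<or> b = x")
      case True
      then show ?thesis using psd_on_pivot[OF fin insert.prems insertI1 a b] by auto
    next
      case False
      with a b have "a \<in> F" "b \<in> F" by auto
      with False B show ?thesis by (simp add: algebra_simps)
    qed
    finally show ?thesis by simp
  qed
  then show ?case by blast
qed

definition word_exponent :: "nat list \<Rightarrow> (nat \<Rightarrow>\<^sub>0 nat)" where
  "word_exponent w = sum_list (map (\<lambda>k. Poly_Mapping.single k 1) w)"

definition words :: "nat \<Rightarrow> nat \<Rightarrow> nat list set" where
  "words n m = {w. set w \<subseteq> {..<n} \<and> length w = m}"

lemma lookup_word_exponent: "Poly_Mapping.lookup (word_exponent w) i = count_list w i"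
  by (induction w) (auto simp: word_exponent_def lookup_add lookup_single when_def)

lemma word_exponent_append: "word_exponent (xs @ ys) = word_exponent xs + word_exponent ys"
  by (simp add: word_exponent_def)

lemma word_exponent_rev: "word_exponent (rev w) = word_exponent w"
  by (rule poly_mapping_eqI) (simp add: lookup_word_exponent)

lemma keys_word_exponent: "Poly_Mapping.keys (word_exponent w) = set w"
  by (auto simp: in_keys_iff lookup_word_exponent count_list_0_iff)

lemma mdeg_word_exponent: "mdeg (word_exponent w) = length w"
  by (simp add: mdeg_def keys_word_exponent lookup_word_exponent sum_count_set)

lemma count_list_replicate: "count_list (replicate k x) y = (if x = y then k else 0)"
  by (induction k) auto

lemma finite_words: "finite (words n m)"
  unfolding words_def by (rule finite_lists_length_eq) simp

lemma word_exponent_words: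
  "word_exponent ` words n m = {\<alpha>. mdeg \<alpha> = m \<and> Poly_Mapping.keys \<alpha> \<subseteq> {..<n}}"
proof
  show "word_exponent ` words n m \<subseteq> {\<alpha>. mdeg \<alpha> = m \<and> Poly_Mapping.keys \<alpha> \<subseteq> {..<n}}"
    by (auto simp: words_def mdeg_word_exponent keys_word_exponent)
next
  show "{\<alpha>. mdeg \<alpha> = m \<and> Poly_Mapping.keys \<alpha> \<subseteq> {..<n}} \<subseteq> word_exponent ` words n m"
  proof
    fix \<alpha> assume \<alpha>: "\<alpha> \<in> {\<alpha>. mdeg \<alpha> = m \<and> Poly_Mapping.keys \<alpha> \<subseteq> {..<n}}"
    define w where "w = concat (map (\<lambda>i. replicate (Poly_Mapping.lookup \<alpha> i) i) [0..<n])"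
    have count: "count_list w j = (if j < n then Poly_Mapping.lookup \<alpha> j else 0)" for j
      unfolding w_def by (induction n) (auto simp: count_list_replicate)
    have "word_exponent w = \<alpha>"
      using \<alpha> by (intro poly_mapping_eqI) (auto simp: lookup_word_exponent count in_keys_iff)
    moreover have "set w \<subseteq> {..<n}" by (auto simp: w_def)
    ultimately show "\<alpha> \<in> word_exponent ` words n m"
      using \<alpha> mdeg_word_exponent[of w] by (auto simp: words_def)
  qed
qed

lemma lookup_mpoly_cnj: "Poly_Mapping.lookup (mpoly_cnj p) \<alpha> = cnj (Poly_Mapping.lookup p \<alpha>)"
  by (simp add: mpoly_cnj_def map.rep_eq when_def)

lemma mpoly_cnj_sum: "mpoly_cnj (sum f A) = (\<Sum>a\<in>A. mpoly_cnj (f a))"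
  by (rule poly_mapping_eqI) (simp add: lookup_mpoly_cnj lookup_sum)

lemma mpoly_cnj_single: "mpoly_cnj (Poly_Mapping.single \<alpha> c) = Poly_Mapping.single \<alpha> (cnj c)"
  by (simp add: mpoly_cnj_def)

lemma single_sum: "Poly_Mapping.single k (sum f A) = (\<Sum>a\<in>A. Poly_Mapping.single k (f a))"
  by (rule poly_mapping_eqI) (simp add: lookup_sum lookup_single when_def)

(* The abelianisation of the homogeneous degree-m part of a noncommutative polynomial
   with coefficient function f. *)
definition word_mpoly :: "nat \<Rightarrow> nat \<Rightarrow> (nat list \<Rightarrow> complex) \<Rightarrow> complex mpoly" where
  "word_mpoly n m f = (\<Sum>w\<in>words n m. Poly_Mapping.single (word_exponent w) (f w))"

lemma mpoly_in_vars_word_mpoly: "mpoly_in_vars n (word_mpoly n m f)"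
  unfolding mpoly_in_vars_def
proof
  fix \<alpha> assume "\<alpha> \<in> Poly_Mapping.keys (word_mpoly n m f)"
  then have "\<alpha> \<in> (\<Union>w\<in>words n m. Poly_Mapping.keys (Poly_Mapping.single (word_exponent w) (f w)))"
    unfolding word_mpoly_def by (rule subsetD[OF keys_sum])
  then obtain w where "w \<in> words n m" "\<alpha> \<in> Poly_Mapping.keys (Poly_Mapping.single (word_exponent w) (f w))"
    by blast
  then show "Poly_Mapping.keys \<alpha> \<subseteq> {..<n}"
    by (auto simp: keys_word_exponent words_def split: if_splits)
qed

lemma word_mpoly_cong:
  "(\<And>u. u \<in> words n m \<Longrightarrow> f u = g u) \<Longrightarrow> word_mpoly n m f = word_mpoly n m g"
  unfolding word_mpoly_def by (rule sum.cong) simp_all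

lemma sum_word_mpoly: "(\<Sum>k\<in>K. word_mpoly n m (f k)) = word_mpoly n m (\<lambda>u. \<Sum>k\<in>K. f k u)"
  unfolding word_mpoly_def single_sum by (rule sum.swap)

lemma words_split_bij:
  "bij_betw (\<lambda>(w, v). rev w @ v) (words n i \<times> words n j) (words n (i + j))"
proof (rule bij_betw_byWitness[where f' = "\<lambda>u. (rev (take i u), drop i u)"])
  show "\<forall>x\<in>words n i \<times> words n j. (\<lambda>u. (rev (take i u), drop i u)) ((\<lambda>(w, v). rev w @ v) x) = x"
    by (auto simp: words_def)
  show "\<forall>u\<in>words n (i + j). (\<lambda>(w, v). rev w @ v) (rev (take i u), drop i u) = u"
    by simp
  show "(\<lambda>(w, v). rev w @ v) ` (words n i \<times> words n j) \<subseteq> words n (i + j)"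
    by (auto simp: words_def)
  show "(\<lambda>u. (rev (take i u), drop i u)) ` words n (i + j) \<subseteq> words n i \<times> words n j"
    using set_take_subset set_drop_subset by (fastforce simp: words_def)
qed

lemma word_mpoly_cnj_mult:
  "mpoly_cnj (word_mpoly n i f) * word_mpoly n j g =
     word_mpoly n (i + j) (\<lambda>u. cnj (f (rev (take i u))) * g (drop i u))"
proof -
  let ?h = "\<lambda>u. Poly_Mapping.single (word_exponent u) (cnj (f (rev (take i u))) * g (drop i u))"
  have "mpoly_cnj (word_mpoly n i f) * word_mpoly n j g
      = (\<Sum>w\<in>words n i. \<Sum>v\<in>words n j. ?h (rev w @ v))"
    unfolding word_mpoly_def mpoly_cnj_sum mpoly_cnj_single sum_product mult_single
    by (intro sum.cong refl) (simp add: word_exponent_append word_exponent_rev words_def)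
  also have "\<dots> = (\<Sum>(w, v)\<in>words n i \<times> words n j. ?h (rev w @ v))"
    by (rule sum.cartesian_product)
  also have "\<dots> = (\<Sum>u\<in>words n (i + j). ?h u)"
    using sum.reindex_bij_betw[OF words_split_bij, of ?h] by (simp add: case_prod_unfold)
  finally show ?thesis unfolding word_mpoly_def .
qed

lemma word_mpoly_gram:
  assumes "\<And>a b. a \<in> words n i \<Longrightarrow> b \<in> words n j \<Longrightarrow> g (rev a @ b) = (\<Sum>k<r. cnj (B k a) * B k b)"
  shows "word_mpoly n (i + j) g = (\<Sum>k<r. mpoly_cnj (word_mpoly n i (B k)) * word_mpoly n j (B k))"
proof -
  have "word_mpoly n (i + j) g = word_mpoly n (i + j) (\<lambda>u. \<Sum>k<r. cnj (B k (rev (take i u))) * B k (drop i u))"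
  proof (rule word_mpoly_cong)
    fix u assume "u \<in> words n (i + j)"
    then have "rev (take i u) \<in> words n i" "drop i u \<in> words n j"
      using set_take_subset[of i u] set_drop_subset[of i u] by (auto simp: words_def)
    from assms[OF this] show "g u = (\<Sum>k<r. cnj (B k (rev (take i u))) * B k (drop i u))"
      by simp
  qed
  then show ?thesis
    unfolding word_mpoly_cnj_mult sum_word_mpoly .
qed

lemma word_mpoly_by_exponent:
  "word_mpoly n m f = (\<Sum>\<alpha>\<in>{\<alpha>. mdeg \<alpha> = m \<and> Poly_Mapping.keys \<alpha> \<subseteq> {..<n}}.
     Poly_Mapping.single \<alpha> (\<Sum>u\<in>{u \<in> words n m. word_exponent u = \<alpha>}. f u))"
proof -
  have fin: "finite {\<alpha>. mdeg \<alpha> = m \<and> Poly_Mapping.keys \<alpha> \<subseteq> {..<n}}"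
    using finite_imageI[OF finite_words, of word_exponent n m] by (simp add: word_exponent_words)
  have "word_mpoly n m f = (\<Sum>\<alpha>\<in>{\<alpha>. mdeg \<alpha> = m \<and> Poly_Mapping.keys \<alpha> \<subseteq> {..<n}}.
      \<Sum>u\<in>{u \<in> words n m. word_exponent u = \<alpha>}. Poly_Mapping.single (word_exponent u) (f u))"
    unfolding word_mpoly_def
    by (rule sum.group[OF finite_words fin, symmetric]) (simp add: word_exponent_words)
  then show ?thesis
    unfolding single_sum by (auto intro!: sum.cong)
qed

definition nc_word :: "nat list \<Rightarrow> ncpoly" where
  "nc_word u = (\<lambda>w. if w = u then 1 else 0)"

lemma nc_word_in_nc_alg: "set u \<subseteq> {..<n} \<Longrightarrow> nc_word u \<in> nc_alg n"
  by (auto simp: nc_word_def nc_alg_def)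

lemma nc_alg_sum:
  assumes "finite K" "\<And>k. k \<in> K \<Longrightarrow> f k \<in> nc_alg n"
  shows "(\<lambda>w. \<Sum>k\<in>K. a k * f k w) \<in> nc_alg n"
proof -
  have supp: "{w. (\<Sum>k\<in>K. a k * f k w) \<noteq> 0} \<subseteq> (\<Union>k\<in>K. {w. f k w \<noteq> 0})"
  proof
    fix w assume "w \<in> {w. (\<Sum>k\<in>K. a k * f k w) \<noteq> 0}"
    then obtain k where "k \<in> K" "a k * f k w \<noteq> 0"
      by (auto elim: sum.not_neutral_contains_not_neutral)
    then show "w \<in> (\<Union>k\<in>K. {w. f k w \<noteq> 0})" by auto
  qed
  have "finite (\<Union>k\<in>K. {w. f k w \<noteq> 0})" using assms by (auto simp: nc_alg_def)
  moreover have "set w \<subseteq> {..<n}" if "w \<in> (\<Union>k\<in>K. {w. f k w \<noteq> 0})" for w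
    using that assms(2) by (auto simp: nc_alg_def)
  ultimately show ?thesis using supp unfolding nc_alg_def by (blast intro: finite_subset)
qed

lemma positive_functional_sum:
  assumes "positive_functional n \<phi>" "finite K" "\<And>k. k \<in> K \<Longrightarrow> f k \<in> nc_alg n"
  shows "\<phi> (\<lambda>w. \<Sum>k\<in>K. a k * f k w) = (\<Sum>k\<in>K. a k * \<phi> (f k))"
  using assms(2,3)
proof (induction K rule: finite_induct)
  case empty
  have "(\<lambda>w::nat list. 0::complex) \<in> nc_alg n" by (simp add: nc_alg_def)
  then have "\<phi> (nc_scale 0 (\<lambda>w. 0)) = 0" using assms(1) unfolding positive_functional_def by simp
  then show ?case by (simp add: nc_scale_def)
next
  case (insert k K)
  have "(\<lambda>w. \<Sum>k\<in>insert k K. a k * f k w) = nc_add (nc_scale (a k) (f k)) (\<lambda>w. \<Sum>k\<in>K. a k * f k w)"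
    using insert.hyps by (simp add: nc_add_def nc_scale_def)
  moreover have "nc_scale (a k) (f k) \<in> nc_alg n"
    using nc_alg_sum[of "{k}" f n "\<lambda>_. a k"] insert.prems by (simp add: nc_scale_def)
  moreover have "(\<lambda>w. \<Sum>k\<in>K. a k * f k w) \<in> nc_alg n"
    using insert by (intro nc_alg_sum) auto
  ultimately show ?case
    using assms(1) insert unfolding positive_functional_def by simp
qed

lemma sum_take_drop_indicator:
  "(\<Sum>i\<le>length w. if take i w = x \<and> drop i w = y then 1 else 0) = (if w = x @ y then 1 else (0::complex))"
proof -
  have "take i w = x \<and> drop i w = y \<longleftrightarrow> i = length x \<and> w = x @ y" if "i \<le> length w" for i
    using that append_take_drop_id[of i w] by (auto simp: min_def)
  then have "(\<Sum>i\<le>length w. if take i w = x \<and> drop i w = y then 1 else (0::complex))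
      = (\<Sum>i\<le>length w. if i = length x then (if w = x @ y then 1 else 0) else 0)"
    by (intro sum.cong) auto
  also have "\<dots> = (if w = x @ y then 1 else 0)" by (auto simp: sum.delta)
  finally show ?thesis .
qed

lemma nc_mult_star_nc_word_comb:
  fixes u :: "nat list \<Rightarrow> complex"
  assumes "finite I"
  defines "p \<equiv> \<lambda>w. \<Sum>b\<in>I. u b * nc_word b w"
  shows "nc_mult (nc_star p) p = (\<lambda>w. \<Sum>(a, b)\<in>I \<times> I. (cnj (u a) * u b) * nc_word (rev a @ b) w)"
proof
  fix w
  have "nc_mult (nc_star p) p w = (\<Sum>i\<le>length w. \<Sum>a\<in>I. \<Sum>b\<in>I.
      cnj (u a) * u b * (if take i w = rev a \<and> drop i w = b then 1 else 0))"
    unfolding nc_mult_def nc_star_def p_def nc_word_def cnj_sum sum_product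
    by (intro sum.cong refl) auto
  also have "\<dots> = (\<Sum>a\<in>I. \<Sum>b\<in>I. \<Sum>i\<le>length w.
      cnj (u a) * u b * (if take i w = rev a \<and> drop i w = b then 1 else 0))"
    by (subst sum.swap) (intro sum.cong refl sum.swap)
  also have "\<dots> = (\<Sum>a\<in>I. \<Sum>b\<in>I. cnj (u a) * u b * nc_word (rev a @ b) w)"
    by (simp only: sum_distrib_left[symmetric] sum_take_drop_indicator nc_word_def)
  finally show "nc_mult (nc_star p) p w = (\<Sum>(a, b)\<in>I \<times> I. (cnj (u a) * u b) * nc_word (rev a @ b) w)"
    by (simp add: sum.cartesian_product)
qed

lemma moment_matrix_psd:
  assumes "positive_functional n \<phi>" "finite I" "\<And>w. w \<in> I \<Longrightarrow> set w \<subseteq> {..<n}"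
  shows "psd_on I (\<lambda>a b. \<phi> (nc_word (rev a @ b)))"
  unfolding psd_on_def
proof
  fix u
  define p where "p = (\<lambda>w. \<Sum>b\<in>I. u b * nc_word b w)"
  have "p \<in> nc_alg n"
    unfolding p_def using assms(2,3) by (intro nc_alg_sum nc_word_in_nc_alg)
  then have pos: "Im (\<phi> (nc_mult (nc_star p) p)) = 0 \<and> 0 \<le> Re (\<phi> (nc_mult (nc_star p) p))"
    using assms(1) unfolding positive_functional_def by blast
  have "\<phi> (nc_mult (nc_star p) p) = (\<Sum>(a, b)\<in>I \<times> I. (cnj (u a) * u b) * \<phi> (nc_word (rev a @ b)))"
    unfolding p_def nc_mult_star_nc_word_comb[OF assms(2)] case_prod_beta
    using assms(2,3) by (intro positive_functional_sum[OF assms(1)] nc_word_in_nc_alg) fastforce+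
  also have "\<dots> = hform I (\<lambda>a b. \<phi> (nc_word (rev a @ b))) u"
    unfolding hform_def sum.cartesian_product by simp
  finally show "Im (hform I (\<lambda>a b. \<phi> (nc_word (rev a @ b))) u) = 0 \<and>
      0 \<le> Re (hform I (\<lambda>a b. \<phi> (nc_word (rev a @ b))) u)"
    using pos by simp
qed

lemma H_word_eq_sum_nc_word:
  assumes "Poly_Mapping.keys \<alpha> \<subseteq> {..<n}"
  shows "H_word \<alpha> = (\<lambda>w. \<Sum>u\<in>{u \<in> words n (mdeg \<alpha>). word_exponent u = \<alpha>}. nc_word u w)"
proof
  fix w
  have "(\<forall>i. count_list w i = Poly_Mapping.lookup \<alpha> i) \<longleftrightarrow> word_exponent w = \<alpha>"
    unfolding poly_mapping_eq_iff fun_eq_iff lookup_word_exponent ..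
  also have "\<dots> \<longleftrightarrow> w \<in> {u \<in> words n (mdeg \<alpha>). word_exponent u = \<alpha>}"
    using assms keys_word_exponent[of w] mdeg_word_exponent[of w] by (auto simp: words_def)
  finally show "H_word \<alpha> w = (\<Sum>u\<in>{u \<in> words n (mdeg \<alpha>). word_exponent u = \<alpha>}. nc_word u w)"
    unfolding H_word_def nc_word_def using finite_words[of n "mdeg \<alpha>"] by (simp add: sum.delta')
qed

lemma hermite_entry_eq_word_mpoly:
  assumes "positive_functional n \<phi>"
    and "\<And>\<alpha>. Poly_Mapping.keys \<alpha> \<subseteq> {..<n} \<Longrightarrow> mdeg \<alpha> = i + j \<Longrightarrow> \<phi> (H_word \<alpha>) = c \<alpha>"
  shows "hermite_entry n c i j = word_mpoly n (i + j) (\<lambda>u. \<phi> (nc_word u))"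
  unfolding hermite_entry_def word_mpoly_by_exponent
proof (intro sum.cong refl)
  fix \<alpha> assume \<alpha>: "\<alpha> \<in> {\<alpha>. mdeg \<alpha> = i + j \<and> Poly_Mapping.keys \<alpha> \<subseteq> {..<n}}"
  let ?U = "{u \<in> words n (i + j). word_exponent u = \<alpha>}"
  have "c \<alpha> = \<phi> (H_word \<alpha>)" using \<alpha> assms(2) by simp
  also have "H_word \<alpha> = (\<lambda>w. \<Sum>u\<in>?U. 1 * nc_word u w)"
    using \<alpha> H_word_eq_sum_nc_word[of \<alpha> n] by simp
  also have "\<phi> \<dots> = (\<Sum>u\<in>?U. 1 * \<phi> (nc_word u))"
  proof (rule positive_functional_sum[OF assms(1)])
    show "finite ?U" using finite_words[of n "i + j"] by simp
  qed (auto simp: words_def intro: nc_word_in_nc_alg)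
  finally show "Poly_Mapping.single \<alpha> (c \<alpha>) = Poly_Mapping.single \<alpha> (\<Sum>u\<in>?U. \<phi> (nc_word u))"
    by simp
qed

(* The hypotheses on h only explain where the numbers c_\<alpha> come from; the certificate
   needs nothing but positivity of \<phi> and its moments. *)
theorem proposition4p2:
  fixes n d :: nat
    and h :: "real mpoly"
    and e :: "nat \<Rightarrow> real"
    and c :: "(nat \<Rightarrow>\<^sub>0 nat) \<Rightarrow> complex"
    and \<phi> :: "ncpoly \<Rightarrow> complex"
  assumes h_vars: "mpoly_in_vars n h"
    and h_hom: "homogeneous d h"
    and h_e: "mpoly_eval h e \<noteq> 0"
    and c_def: "\<And>k a. newton_sum k (h_ae h a e) =
                  (\<Sum>\<alpha>\<in>{\<alpha>. mdeg \<alpha> = k \<and> Poly_Mapping.keys \<alpha> \<subseteq> {..<n}}.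
                      c \<alpha> * mono_eval (\<lambda>i. complex_of_real (a i)) \<alpha>)"
    and \<phi>_pos: "positive_functional n \<phi>"
    and \<phi>_mom: "\<And>\<alpha>. Poly_Mapping.keys \<alpha> \<subseteq> {..<n} \<Longrightarrow> int (mdeg \<alpha>) \<le> 2 * (int d - 1) \<Longrightarrow>
                  \<phi> (H_word \<alpha>) = c \<alpha>"
  shows "\<exists>As :: (nat \<times> (nat \<Rightarrow> nat \<Rightarrow> complex mpoly)) list.
           (\<forall>(r, A)\<in>set As. \<forall>k<r. \<forall>i<d. mpoly_in_vars n (A k i)) \<and>
           (\<forall>i<d. \<forall>j<d. hermite_entry n c i j =
               (\<Sum>(r, A)\<leftarrow>As. \<Sum>k<r. mpoly_cnj (A k i) * A k j))"
proof -
  define I where "I = {w. set w \<subseteq> {..<n} \<and> length w < d}"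
  have fin: "finite I"
    unfolding I_def by (rule finite_subset[OF _ finite_lists_length_le[of "{..<n}" d]]) auto
  have "psd_on I (\<lambda>a b. \<phi> (nc_word (rev a @ b)))"
    by (rule moment_matrix_psd[OF \<phi>_pos fin]) (simp add: I_def)
  then obtain r :: nat and B
    where B: "\<forall>a\<in>I. \<forall>b\<in>I. \<phi> (nc_word (rev a @ b)) = (\<Sum>k<r. cnj (B k a) * B k b)"
    using psd_on_gram_factorization[OF fin] by blast
  define A where "A k i = word_mpoly n i (B k)" for k i
  have "hermite_entry n c i j = (\<Sum>k<r. mpoly_cnj (A k i) * A k j)" if "i < d" "j < d" for i j
  proof -
    have "hermite_entry n c i j = word_mpoly n (i + j) (\<lambda>u. \<phi> (nc_word u))"
      using that by (intro hermite_entry_eq_word_mpoly[OF \<phi>_pos] \<phi>_mom) auto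
    also have "\<dots> = (\<Sum>k<r. mpoly_cnj (A k i) * A k j)"
      unfolding A_def using that B by (intro word_mpoly_gram) (auto simp: I_def words_def)
    finally show ?thesis .
  qed
  then show ?thesis
    by (intro exI[of _ "[(r, A)]"]) (simp add: A_def mpoly_in_vars_word_mpoly)
qed

end
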